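(* Let $\Omega=(0,l_x)\times(0,l_y)\times(0,l_z)$ be discretized by cubic cells of side $h=l_x/N_x=l_y/N_y=l_z/N_z$ with cell centers $(x_i,y_j,z_k)=((i-\tfrac12)h,(j-\tfrac12)h,(k-\tfrac12)h)$, $1\le i\le N_x$, $1\le j\le N_y$, $1\le k\le N_z$. Let $\epsilon>0$, $S>0$, $\Delta t>0$, $F(\phi)=\frac14(\phi^2-1)^2$, and let $g_{ijk}\ge 0$ be given grid values (in the paper $g_{ijk}=g(\mathbf{x}_{ijk})$ with $g=1-\phi_0^2+\lambda\ge\lambda>0$). Let $n\ge1$ and let grid functions $\phi^{n-1},\phi^n$ be given; set $\phi^*=\frac32\phi^n-\frac12\phi^{n-1}$. Suppose grid functions $\phi^{n+1},\mu^{n+\frac12}$ and a real number $Q^{n+\frac12}$ satisfy, for all $i,j,k$, $$\frac{\phi^{n+1}_{ijk}-\phi^n_{ijk}}{\Delta t}=-g_{ijk}\mu^{n+\frac12}_{ijk},$$ $$\mu^{n+\frac12}_{ijk}=Q^{n+\frac12}\frac{F'(\phi^*_{ijk})}{\epsilon^2}-\Delta_d\Big(\frac{\phi^{n+1}_{ijk}+\phi^n_{ijk}}{2}\Big)+S\Big(\frac{\phi^{n+1}_{ijk}+\phi^n_{ijk}}{2}-\phi^*_{ijk}\Big),$$ $$\big(F(\phi^{n+1})-F(\phi^n),\mathbf{1}\big)_h=Q^{n+\frac12}\big(F'(\phi^* ),\phi^{n+1}-\phi^n\big)_h,$$ where all grid functions satisfy the discrete homogeneous Neumann conditions described in the context.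 Then $$\frac{1}{\epsilon^2}\big(F(\phi^{n+1})-F(\phi^n),\mathbf{1}\big)_h+\frac12\big(\|\nabla_d\phi^{n+1}\|_e^2-\|\nabla_d\phi^n\|_e^2\big)+\frac S4\big(\|\phi^{n+1}-\phi^n\|_h^2-\|\phi^n-\phi^{n-1}\|_h^2\big)$$ $$=-\Delta t\,\|\sqrt{g}\,\mu^{n+\frac12}\|_h^2-\frac S4\|\phi^{n+1}-2\phi^n+\phi^{n-1}\|_h^2\le 0,$$ and consequently the discrete energy $$\tilde E(\phi^{n+1},\phi^n):=\frac{1}{\epsilon^2}\big(F(\phi^{n+1}),\mathbf{1}\big)_h+\frac12\|\nabla_d\phi^{n+1}\|_e^2+\frac S4\|\phi^{n+1}-\phi^n\|_h^2$$ satisfies $\tilde E(\phi^{n+1},\phi^n)\le\tilde E(\phi^n,\phi^{n-1})$ (unconditional energy stability, for any $\Delta t>0$).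
   Context: Discrete Neumann conditions (ghost values): $\phi_{0,jk}=\phi_{1,jk}$, $\phi_{N_x+1,jk}=\phi_{N_x,jk}$, $\phi_{i,0,k}=\phi_{i,1,k}$, $\phi_{i,N_y+1,k}=\phi_{i,N_y,k}$, $\phi_{ij,0}=\phi_{ij,1}$, $\phi_{ij,N_z+1}=\phi_{ij,N_z}$, and likewise for $\mu$. The discrete Laplacian is $\Delta_d\phi_{ijk}=(\phi_{i+1,jk}+\phi_{i-1,jk}+\phi_{i,j+1,k}+\phi_{i,j-1,k}+\phi_{ij,k+1}+\phi_{ij,k-1}-6\phi_{ijk})/h^2$. Inner products: $(\phi,\psi)_h=h^3\sum_{i=1}^{N_x}\sum_{j=1}^{N_y}\sum_{k=1}^{N_z}\phi_{ijk}\psi_{ijk}$, $\|\phi\|_h^2=(\phi,\phi)_h$, $\mathbf{1}$ is the grid function identically $1$, and $\sqrt{g}\mu$ denotes the grid function $\sqrt{g_{ijk}}\mu_{ijk}$. With $D_x\phi_{i+\frac12,jk}=(\phi_{i+1,jk}-\phi_{ijk})/h$ and analogously $D_y,D_z$, $(\nabla_d\phi,\nabla_d\psi)_e=h^3\big(\sum_{i=0}^{N_x}\sum_{j=1}^{N_y}\sum_{k=1}^{N_z}D_x\phi_{i+\frac12,jk}D_x\psi_{i+\frac12,jk}+\sum_{i=1}^{N_x}\sum_{j=0}^{N_y}\sum_{k=1}^{N_z}D_y\phi_{i,j+\frac12,k}D_y\psi_{i,j+\frac12,k}+\sum_{i=1}^{N_x}\sum_{j=1}^{N_y}\sum_{k=0}^{N_z}D_z\phi_{ij,k+\frac12}D_z\psi_{ij,k+\frac12}\big)$,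 and $\|\nabla_d\phi\|_e^2=(\nabla_d\phi,\nabla_d\phi)_e$. *)

theory Defs
  imports Complex_Main
begin

text \<open>Grid functions on the cell-centred grid, including ghost layers:
  indices 0 and N+1 are ghost cells, 1..N are interior cells.\<close>
type_synonym grid = "nat \<Rightarrow> nat \<Rightarrow> nat \<Rightarrow> real"

definition F :: "real \<Rightarrow> real" where
  "F x = (x^2 - 1)^2 / 4"

definition dF :: "real \<Rightarrow> real" where
  "dF x = x^3 - x"

definition neumann :: "nat \<Rightarrow> nat \<Rightarrow> nat \<Rightarrow> grid \<Rightarrow> bool" where
  "neumann Nx Ny Nz \<phi> \<longleftrightarrow>
     (\<forall>j\<in>{1..Ny}. \<forall>k\<in>{1..Nz}. \<phi> 0 j k = \<phi> 1 j k \<and> \<phi> (Nx+1) j k = \<phi> Nx j k) \<and>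
     (\<forall>i\<in>{1..Nx}. \<forall>k\<in>{1..Nz}. \<phi> i 0 k = \<phi> i 1 k \<and> \<phi> i (Ny+1) k = \<phi> i Ny k) \<and>
     (\<forall>i\<in>{1..Nx}. \<forall>j\<in>{1..Ny}. \<phi> i j 0 = \<phi> i j 1 \<and> \<phi> i j (Nz+1) = \<phi> i j Nz)"

definition lap_d :: "real \<Rightarrow> grid \<Rightarrow> nat \<Rightarrow> nat \<Rightarrow> nat \<Rightarrow> real" where
  "lap_d h \<phi> i j k =
     (\<phi> (i+1) j k + \<phi> (i-1) j k + \<phi> i (j+1) k + \<phi> i (j-1) k
      + \<phi> i j (k+1) + \<phi> i j (k-1) - 6 * \<phi> i j k) / h^2"

definition inner_h :: "nat \<Rightarrow> nat \<Rightarrow> nat \<Rightarrow> real \<Rightarrow> grid \<Rightarrow> grid \<Rightarrow> real" where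
  "inner_h Nx Ny Nz h \<phi> \<psi> =
     h^3 * (\<Sum>i=1..Nx. \<Sum>j=1..Ny. \<Sum>k=1..Nz. \<phi> i j k * \<psi> i j k)"

definition norm_h :: "nat \<Rightarrow> nat \<Rightarrow> nat \<Rightarrow> real \<Rightarrow> grid \<Rightarrow> real" where
  "norm_h Nx Ny Nz h \<phi> = sqrt (inner_h Nx Ny Nz h \<phi> \<phi>)"

text \<open>Edge-centred difference quotients D_x, D_y, D_z evaluated at i+1/2 etc.\<close>
definition Dx :: "real \<Rightarrow> grid \<Rightarrow> nat \<Rightarrow> nat \<Rightarrow> nat \<Rightarrow> real" where
  "Dx h \<phi> i j k = (\<phi> (i+1) j k - \<phi> i j k) / h"
definition Dy :: "real \<Rightarrow> grid \<Rightarrow> nat \<Rightarrow> nat \<Rightarrow> nat \<Rightarrow> real" where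
  "Dy h \<phi> i j k = (\<phi> i (j+1) k - \<phi> i j k) / h"
definition Dz :: "real \<Rightarrow> grid \<Rightarrow> nat \<Rightarrow> nat \<Rightarrow> nat \<Rightarrow> real" where
  "Dz h \<phi> i j k = (\<phi> i j (k+1) - \<phi> i j k) / h"

definition inner_e :: "nat \<Rightarrow> nat \<Rightarrow> nat \<Rightarrow> real \<Rightarrow> grid \<Rightarrow> grid \<Rightarrow> real" where
  "inner_e Nx Ny Nz h \<phi> \<psi> = h^3 *
     ((\<Sum>i=0..Nx. \<Sum>j=1..Ny. \<Sum>k=1..Nz. Dx h \<phi> i j k * Dx h \<psi> i j k)
    + (\<Sum>i=1..Nx. \<Sum>j=0..Ny. \<Sum>k=1..Nz. Dy h \<phi> i j k * Dy h \<psi> i j k)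
    + (\<Sum>i=1..Nx. \<Sum>j=1..Ny. \<Sum>k=0..Nz. Dz h \<phi> i j k * Dz h \<psi> i j k))"

definition norm_e :: "nat \<Rightarrow> nat \<Rightarrow> nat \<Rightarrow> real \<Rightarrow> grid \<Rightarrow> real" where
  "norm_e Nx Ny Nz h \<phi> = sqrt (inner_e Nx Ny Nz h \<phi> \<phi>)"

definition Etilde :: "nat \<Rightarrow> nat \<Rightarrow> nat \<Rightarrow> real \<Rightarrow> real \<Rightarrow> real \<Rightarrow> grid \<Rightarrow> grid \<Rightarrow> real" where
  "Etilde Nx Ny Nz h \<epsilon> S \<phi>1 \<phi>0 =
     inner_h Nx Ny Nz h (\<lambda>i j k. F (\<phi>1 i j k)) (\<lambda>_ _ _. 1) / \<epsilon>^2
     + (norm_e Nx Ny Nz h \<phi>1)^2 / 2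
     + S / 4 * (norm_h Nx Ny Nz h (\<lambda>i j k. \<phi>1 i j k - \<phi>0 i j k))^2"

end

theory Submission
  imports Defs
begin

text \<open>Test the chemical-potential equation with the increment \<open>a = \<phi>p - \<phi>n\<close>. Summation by
  parts under the Neumann ghost values turns the Crank-Nicolson Laplacian term into the change of
  half the discrete Dirichlet energy; the identity \<open>2(a - b)a = a^2 - b^2 + (a - b)^2\<close> with
  \<open>b = \<phi>n - \<phi>m\<close> turns the stabilisation term into the change of \<open>S/4 \<parallel>a\<parallel>^2\<close> plus the
  nonnegative \<open>S/4 \<parallel>a - b\<parallel>^2\<close>; and the scalar relation defining Q turns the explicit nonlinear
  term exactly into the change of the bulk energy. Testing the evolution equation with the
  chemical potential identifies the same inner product with \<open>-\<Delta>t \<parallel>\<surd>g \<mu>\<parallel>^2 \<le> 0\<close>, with no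
  restriction on \<open>\<Delta>t\<close>.\<close>

lemma inner_h_cong:
  assumes "\<And>i j k. i \<in> {1..Nx} \<Longrightarrow> j \<in> {1..Ny} \<Longrightarrow> k \<in> {1..Nz} \<Longrightarrow>
             \<phi> i j k * \<psi> i j k = \<phi>' i j k * \<psi>' i j k"
  shows "inner_h Nx Ny Nz h \<phi> \<psi> = inner_h Nx Ny Nz h \<phi>' \<psi>'"
  unfolding inner_h_def using assms by (intro arg_cong[where f = "(*) (h^3)"] sum.cong refl) auto

lemma inner_h_add_left:
  "inner_h Nx Ny Nz h (\<lambda>i j k. \<phi> i j k + \<phi>' i j k) \<psi>
   = inner_h Nx Ny Nz h \<phi> \<psi> + inner_h Nx Ny Nz h \<phi>' \<psi>"
  by (simp add: inner_h_def distrib_left distrib_right sum.distrib)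

lemma inner_h_diff_left:
  "inner_h Nx Ny Nz h (\<lambda>i j k. \<phi> i j k - \<phi>' i j k) \<psi>
   = inner_h Nx Ny Nz h \<phi> \<psi> - inner_h Nx Ny Nz h \<phi>' \<psi>"
  by (simp add: inner_h_def right_diff_distrib left_diff_distrib sum_subtractf)

lemma inner_h_scale_left:
  "inner_h Nx Ny Nz h (\<lambda>i j k. c * \<phi> i j k) \<psi> = c * inner_h Nx Ny Nz h \<phi> \<psi>"
  by (simp add: inner_h_def sum_distrib_left mult_ac)

lemma inner_h_self_nonneg: "h \<ge> 0 \<Longrightarrow> inner_h Nx Ny Nz h \<phi> \<phi> \<ge> 0"
  by (simp add: inner_h_def sum_nonneg)

lemma norm_h_square: "h \<ge> 0 \<Longrightarrow> (norm_h Nx Ny Nz h \<phi>)^2 = inner_h Nx Ny Nz h \<phi> \<phi>"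
  by (simp add: norm_h_def inner_h_self_nonneg)

lemma inner_h_diff_polarization:
  "inner_h Nx Ny Nz h (\<lambda>i j k. \<phi> i j k - \<psi> i j k) \<phi>
   = (inner_h Nx Ny Nz h \<phi> \<phi> - inner_h Nx Ny Nz h \<psi> \<psi>
      + inner_h Nx Ny Nz h (\<lambda>i j k. \<phi> i j k - \<psi> i j k) (\<lambda>i j k. \<phi> i j k - \<psi> i j k)) / 2"
  by (simp add: inner_h_def algebra_simps sum.distrib sum_subtractf sum_distrib_left)

lemma inner_e_self_nonneg: "h \<ge> 0 \<Longrightarrow> inner_e Nx Ny Nz h \<phi> \<phi> \<ge> 0"
  by (simp add: inner_e_def sum_nonneg)

lemma norm_e_square: "h \<ge> 0 \<Longrightarrow> (norm_e Nx Ny Nz h \<phi>)^2 = inner_e Nx Ny Nz h \<phi> \<phi>"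
  by (simp add: norm_e_def inner_e_self_nonneg)

lemma inner_e_midpoint_increment:
  "inner_e Nx Ny Nz h (\<lambda>i j k. (\<phi> i j k + \<psi> i j k) / 2) (\<lambda>i j k. \<phi> i j k - \<psi> i j k)
   = (inner_e Nx Ny Nz h \<phi> \<phi> - inner_e Nx Ny Nz h \<psi> \<psi>) / 2"
proof -
  have midpoint: "((a' + b') / 2 - (a + b) / 2) / h * ((a' - b' - (a - b)) / h)
                = 1/2 * ((a' - a) / h * ((a' - a) / h)) - 1/2 * ((b' - b) / h * ((b' - b) / h))"
    for a a' b b' :: real
    by (cases "h = 0") (simp_all add: field_simps)
  have difference_quotients:
       "Dx h (\<lambda>i j k. (\<phi> i j k + \<psi> i j k) / 2) i j k * Dx h (\<lambda>i j k. \<phi> i j k - \<psi> i j k) i j k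
      = 1/2 * (Dx h \<phi> i j k * Dx h \<phi> i j k) - 1/2 * (Dx h \<psi> i j k * Dx h \<psi> i j k)"
       "Dy h (\<lambda>i j k. (\<phi> i j k + \<psi> i j k) / 2) i j k * Dy h (\<lambda>i j k. \<phi> i j k - \<psi> i j k) i j k
      = 1/2 * (Dy h \<phi> i j k * Dy h \<phi> i j k) - 1/2 * (Dy h \<psi> i j k * Dy h \<psi> i j k)"
       "Dz h (\<lambda>i j k. (\<phi> i j k + \<psi> i j k) / 2) i j k * Dz h (\<lambda>i j k. \<phi> i j k - \<psi> i j k) i j k
      = 1/2 * (Dz h \<phi> i j k * Dz h \<phi> i j k) - 1/2 * (Dz h \<psi> i j k * Dz h \<psi> i j k)" for i j k
    unfolding Dx_def Dy_def Dz_def by (rule midpoint)+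
  show ?thesis
    unfolding inner_e_def difference_quotients
    by (simp add: sum_subtractf sum_distrib_left[symmetric] sum_divide_distrib[symmetric]
        algebra_simps)
qed

lemma summation_by_parts_neumann:
  fixes u v :: "nat \<Rightarrow> real"
  assumes "u 0 = u 1" and "u (N + 1) = u N"
  shows "(\<Sum>i=1..N. (u (i + 1) + u (i - 1) - 2 * u i) * v i)
       = - (\<Sum>i=0..N. (u (i + 1) - u i) * (v (i + 1) - v i))"
proof -
  have "(\<Sum>i=1..N. (u (i + 1) + u (i - 1) - 2 * u i) * v i)
      = (u (N + 1) - u N) * v (N + 1) - (u 1 - u 0) * v 0
        - (\<Sum>i=0..N. (u (i + 1) - u i) * (v (i + 1) - v i))"
    by (induction N) (auto simp: algebra_simps)
  with assms show ?thesis by simp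
qed

lemma sum_second_difference_x:
  fixes u v :: grid
  assumes "\<forall>j\<in>{1..Ny}. \<forall>k\<in>{1..Nz}. u 0 j k = u 1 j k \<and> u (Nx + 1) j k = u Nx j k"
  shows "(\<Sum>i=1..Nx. \<Sum>j=1..Ny. \<Sum>k=1..Nz. (u (i + 1) j k + u (i - 1) j k - 2 * u i j k) * v i j k)
       = - (\<Sum>i=0..Nx. \<Sum>j=1..Ny. \<Sum>k=1..Nz. (u (i + 1) j k - u i j k) * (v (i + 1) j k - v i j k))"
proof -
  have "(\<Sum>i=1..Nx. \<Sum>j=1..Ny. \<Sum>k=1..Nz. (u (i + 1) j k + u (i - 1) j k - 2 * u i j k) * v i j k)
      = (\<Sum>j=1..Ny. \<Sum>k=1..Nz. \<Sum>i=1..Nx. (u (i + 1) j k + u (i - 1) j k - 2 * u i j k) * v i j k)"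
    by (subst sum.swap, rule sum.cong, simp, rule sum.swap)
  also have "\<dots> = (\<Sum>j=1..Ny. \<Sum>k=1..Nz.
                    - (\<Sum>i=0..Nx. (u (i + 1) j k - u i j k) * (v (i + 1) j k - v i j k)))"
    using assms by (intro sum.cong refl summation_by_parts_neumann) auto
  also have "\<dots> = - (\<Sum>i=0..Nx. \<Sum>j=1..Ny. \<Sum>k=1..Nz. (u (i + 1) j k - u i j k) * (v (i + 1) j k - v i j k))"
    by (simp add: sum_negf, subst sum.swap, rule sum.cong, simp, rule sum.swap)
  finally show ?thesis .
qed

lemma sum_second_difference_y:
  fixes u v :: grid
  assumes "\<forall>i\<in>{1..Nx}. \<forall>k\<in>{1..Nz}. u i 0 k = u i 1 k \<and> u i (Ny + 1) k = u i Ny k"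
  shows "(\<Sum>i=1..Nx. \<Sum>j=1..Ny. \<Sum>k=1..Nz. (u i (j + 1) k + u i (j - 1) k - 2 * u i j k) * v i j k)
       = - (\<Sum>i=1..Nx. \<Sum>j=0..Ny. \<Sum>k=1..Nz. (u i (j + 1) k - u i j k) * (v i (j + 1) k - v i j k))"
proof -
  have "(\<Sum>i=1..Nx. \<Sum>j=1..Ny. \<Sum>k=1..Nz. (u i (j + 1) k + u i (j - 1) k - 2 * u i j k) * v i j k)
      = (\<Sum>i=1..Nx. \<Sum>k=1..Nz. \<Sum>j=1..Ny. (u i (j + 1) k + u i (j - 1) k - 2 * u i j k) * v i j k)"
    by (rule sum.cong, simp, rule sum.swap)
  also have "\<dots> = (\<Sum>i=1..Nx. \<Sum>k=1..Nz.
                    - (\<Sum>j=0..Ny. (u i (j + 1) k - u i j k) * (v i (j + 1) k - v i j k)))"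
    using assms by (intro sum.cong refl summation_by_parts_neumann) auto
  also have "\<dots> = - (\<Sum>i=1..Nx. \<Sum>j=0..Ny. \<Sum>k=1..Nz. (u i (j + 1) k - u i j k) * (v i (j + 1) k - v i j k))"
    by (simp add: sum_negf, rule sum.cong, simp, rule sum.swap)
  finally show ?thesis .
qed

lemma sum_second_difference_z:
  fixes u v :: grid
  assumes "\<forall>i\<in>{1..Nx}. \<forall>j\<in>{1..Ny}. u i j 0 = u i j 1 \<and> u i j (Nz + 1) = u i j Nz"
  shows "(\<Sum>i=1..Nx. \<Sum>j=1..Ny. \<Sum>k=1..Nz. (u i j (k + 1) + u i j (k - 1) - 2 * u i j k) * v i j k)
       = - (\<Sum>i=1..Nx. \<Sum>j=1..Ny. \<Sum>k=0..Nz. (u i j (k + 1) - u i j k) * (v i j (k + 1) - v i j k))"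
proof -
  have "(\<Sum>i=1..Nx. \<Sum>j=1..Ny. \<Sum>k=1..Nz. (u i j (k + 1) + u i j (k - 1) - 2 * u i j k) * v i j k)
      = (\<Sum>i=1..Nx. \<Sum>j=1..Ny. - (\<Sum>k=0..Nz. (u i j (k + 1) - u i j k) * (v i j (k + 1) - v i j k)))"
    using assms by (intro sum.cong refl summation_by_parts_neumann) auto
  then show ?thesis by (simp add: sum_negf)
qed

lemma neumann_midpoint:
  "neumann Nx Ny Nz \<phi> \<Longrightarrow> neumann Nx Ny Nz \<psi> \<Longrightarrow>
   neumann Nx Ny Nz (\<lambda>i j k. (\<phi> i j k + \<psi> i j k) / 2)"
  unfolding neumann_def by auto

lemma inner_h_lap_d:
  assumes "neumann Nx Ny Nz u"
  shows "inner_h Nx Ny Nz h (lap_d h u) v = - inner_e Nx Ny Nz h u v"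
proof -
  have "\<forall>j\<in>{1..Ny}. \<forall>k\<in>{1..Nz}. u 0 j k = u 1 j k \<and> u (Nx + 1) j k = u Nx j k"
       "\<forall>i\<in>{1..Nx}. \<forall>k\<in>{1..Nz}. u i 0 k = u i 1 k \<and> u i (Ny + 1) k = u i Ny k"
       "\<forall>i\<in>{1..Nx}. \<forall>j\<in>{1..Ny}. u i j 0 = u i j 1 \<and> u i j (Nz + 1) = u i j Nz"
    using assms unfolding neumann_def by auto
  note by_parts = sum_second_difference_x[OF this(1)] sum_second_difference_y[OF this(2)]
    sum_second_difference_z[OF this(3)]
  have lap_d_summand: "lap_d h u i j k * v i j k
      = ((u (i + 1) j k + u (i - 1) j k - 2 * u i j k) * v i j k
         + (u i (j + 1) k + u i (j - 1) k - 2 * u i j k) * v i j k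
         + (u i j (k + 1) + u i j (k - 1) - 2 * u i j k) * v i j k) / h^2" for i j k
    by (simp add: lap_d_def field_simps)
  have difference_quotient_products:
       "Dx h u i j k * Dx h v i j k = (u (i + 1) j k - u i j k) * (v (i + 1) j k - v i j k) / h^2"
       "Dy h u i j k * Dy h v i j k = (u i (j + 1) k - u i j k) * (v i (j + 1) k - v i j k) / h^2"
       "Dz h u i j k * Dz h v i j k = (u i j (k + 1) - u i j k) * (v i j (k + 1) - v i j k) / h^2" for i j k
    by (simp_all add: Dx_def Dy_def Dz_def power2_eq_square)
  show ?thesis
    unfolding inner_h_def inner_e_def lap_d_summand difference_quotient_products
      sum_divide_distrib[symmetric] sum.distrib by_parts
    by (cases "h = 0") (simp_all add: field_simps)
qed

lemma inner_h_mobility_increment: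
  fixes g \<mu> \<phi> \<phi>' :: grid
  assumes "\<Delta>t \<noteq> 0" and "h \<ge> 0"
    and g_nonneg: "\<forall>i\<in>{1..Nx}. \<forall>j\<in>{1..Ny}. \<forall>k\<in>{1..Nz}. g i j k \<ge> 0"
    and step: "\<forall>i\<in>{1..Nx}. \<forall>j\<in>{1..Ny}. \<forall>k\<in>{1..Nz}.
                 (\<phi>' i j k - \<phi> i j k) / \<Delta>t = - g i j k * \<mu> i j k"
  shows "inner_h Nx Ny Nz h \<mu> (\<lambda>i j k. \<phi>' i j k - \<phi> i j k)
         = - \<Delta>t * (norm_h Nx Ny Nz h (\<lambda>i j k. sqrt (g i j k) * \<mu> i j k))^2"
proof -
  have "inner_h Nx Ny Nz h \<mu> (\<lambda>i j k. \<phi>' i j k - \<phi> i j k)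
      = inner_h Nx Ny Nz h (\<lambda>i j k. - \<Delta>t * (sqrt (g i j k) * \<mu> i j k))
                           (\<lambda>i j k. sqrt (g i j k) * \<mu> i j k)"
  proof (rule inner_h_cong)
    fix i j k assume "i \<in> {1..Nx}" "j \<in> {1..Ny}" "k \<in> {1..Nz}"
    with g_nonneg step \<open>\<Delta>t \<noteq> 0\<close> have "g i j k \<ge> 0"
      and increment: "\<phi>' i j k - \<phi> i j k = - \<Delta>t * g i j k * \<mu> i j k"
      by (auto simp: field_simps)
    then show "\<mu> i j k * (\<phi>' i j k - \<phi> i j k)
             = - \<Delta>t * (sqrt (g i j k) * \<mu> i j k) * (sqrt (g i j k) * \<mu> i j k)"
      unfolding increment by (simp add: algebra_simps)
  qed
  also have "\<dots> = - \<Delta>t * inner_h Nx Ny Nz h (\<lambda>i j k. sqrt (g i j k) * \<mu> i j k)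
                                             (\<lambda>i j k. sqrt (g i j k) * \<mu> i j k)"
    by (rule inner_h_scale_left)
  finally show ?thesis using \<open>h \<ge> 0\<close> by (simp only: norm_h_square)
qed

lemma inner_h_chemical_potential_increment:
  fixes r \<mu> \<phi>m \<phi>n \<phi>p :: grid
  assumes "neumann Nx Ny Nz \<phi>p" and "neumann Nx Ny Nz \<phi>n" and "h \<ge> 0"
    and chemical_potential: "\<forall>i\<in>{1..Nx}. \<forall>j\<in>{1..Ny}. \<forall>k\<in>{1..Nz}.
          \<mu> i j k = r i j k - lap_d h (\<lambda>a b c. (\<phi>p a b c + \<phi>n a b c) / 2) i j k
                     + S * ((\<phi>p i j k + \<phi>n i j k) / 2 - (3/2 * \<phi>n i j k - 1/2 * \<phi>m i j k))"
  shows "inner_h Nx Ny Nz h \<mu> (\<lambda>i j k. \<phi>p i j k - \<phi>n i j k)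
         = inner_h Nx Ny Nz h r (\<lambda>i j k. \<phi>p i j k - \<phi>n i j k)
           + 1/2 * ((norm_e Nx Ny Nz h \<phi>p)^2 - (norm_e Nx Ny Nz h \<phi>n)^2)
           + S/4 * ((norm_h Nx Ny Nz h (\<lambda>i j k. \<phi>p i j k - \<phi>n i j k))^2
                    - (norm_h Nx Ny Nz h (\<lambda>i j k. \<phi>n i j k - \<phi>m i j k))^2
                    + (norm_h Nx Ny Nz h (\<lambda>i j k. \<phi>p i j k - 2 * \<phi>n i j k + \<phi>m i j k))^2)"
proof -
  let ?u = "\<lambda>i j k. (\<phi>p i j k + \<phi>n i j k) / 2"
  let ?a = "\<lambda>i j k. \<phi>p i j k - \<phi>n i j k"
  let ?b = "\<lambda>i j k. \<phi>n i j k - \<phi>m i j k"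
  let ?c = "\<lambda>i j k. \<phi>p i j k - 2 * \<phi>n i j k + \<phi>m i j k"
  have "inner_h Nx Ny Nz h \<mu> ?a
      = inner_h Nx Ny Nz h (\<lambda>i j k. r i j k - lap_d h ?u i j k + S/2 * ?c i j k) ?a"
  proof (rule inner_h_cong)
    fix i j k assume "i \<in> {1..Nx}" "j \<in> {1..Ny}" "k \<in> {1..Nz}"
    with chemical_potential have \<mu>_eq: "\<mu> i j k = r i j k - lap_d h ?u i j k
        + S * ((\<phi>p i j k + \<phi>n i j k) / 2 - (3/2 * \<phi>n i j k - 1/2 * \<phi>m i j k))"
      by blast
    show "\<mu> i j k * ?a i j k = (r i j k - lap_d h ?u i j k + S/2 * ?c i j k) * ?a i j k"
      unfolding \<mu>_eq by (simp add: field_simps)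
  qed
  also have "\<dots> = inner_h Nx Ny Nz h r ?a - inner_h Nx Ny Nz h (lap_d h ?u) ?a
                  + S/2 * inner_h Nx Ny Nz h ?c ?a"
    by (simp only: inner_h_add_left inner_h_diff_left inner_h_scale_left)
  finally have split: "inner_h Nx Ny Nz h \<mu> ?a = inner_h Nx Ny Nz h r ?a
      - inner_h Nx Ny Nz h (lap_d h ?u) ?a + S/2 * inner_h Nx Ny Nz h ?c ?a" .
  have green: "inner_h Nx Ny Nz h (lap_d h ?u) ?a = - inner_e Nx Ny Nz h ?u ?a"
    using assms(1,2) by (intro inner_h_lap_d neumann_midpoint)
  have polarization: "inner_h Nx Ny Nz h ?c ?a
      = (inner_h Nx Ny Nz h ?a ?a - inner_h Nx Ny Nz h ?b ?b + inner_h Nx Ny Nz h ?c ?c) / 2"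
  proof -
    have "?c = (\<lambda>i j k. ?a i j k - ?b i j k)" by (simp add: algebra_simps)
    then show ?thesis using inner_h_diff_polarization[of Nx Ny Nz h ?a ?b] by simp
  qed
  show ?thesis
    unfolding split green inner_e_midpoint_increment polarization
      norm_h_square[OF \<open>h \<ge> 0\<close>] norm_e_square[OF \<open>h \<ge> 0\<close>]
    by (simp add: field_simps)
qed

lemma Etilde_diff:
  "Etilde Nx Ny Nz h \<epsilon> S \<phi>p \<phi>n - Etilde Nx Ny Nz h \<epsilon> S \<phi>n \<phi>m
   = inner_h Nx Ny Nz h (\<lambda>i j k. F (\<phi>p i j k) - F (\<phi>n i j k)) (\<lambda>_ _ _. 1) / \<epsilon>^2
     + 1/2 * ((norm_e Nx Ny Nz h \<phi>p)^2 - (norm_e Nx Ny Nz h \<phi>n)^2)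
     + S/4 * ((norm_h Nx Ny Nz h (\<lambda>i j k. \<phi>p i j k - \<phi>n i j k))^2
              - (norm_h Nx Ny Nz h (\<lambda>i j k. \<phi>n i j k - \<phi>m i j k))^2)"
  by (simp add: Etilde_def inner_h_diff_left diff_divide_distrib algebra_simps)

theorem mainTheorem2:
  fixes Nx Ny Nz :: nat
    and lx ly lz h \<epsilon> S \<Delta>t Q :: real
    and g \<phi>m \<phi>n \<phi>p \<mu> :: grid
  assumes "Nx \<ge> 1" and "Ny \<ge> 1" and "Nz \<ge> 1"
    and "lx > 0" and "ly > 0" and "lz > 0"
    and "h = lx / Nx" and "h = ly / Ny" and "h = lz / Nz"
    and "\<epsilon> > 0" and "S > 0" and "\<Delta>t > 0"
    and g_nonneg: "\<forall>i\<in>{1..Nx}. \<forall>j\<in>{1..Ny}. \<forall>k\<in>{1..Nz}. g i j k \<ge> 0"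
    and "neumann Nx Ny Nz \<phi>m" and "neumann Nx Ny Nz \<phi>n"
    and "neumann Nx Ny Nz \<phi>p" and "neumann Nx Ny Nz \<mu>"
    and eq1: "\<forall>i\<in>{1..Nx}. \<forall>j\<in>{1..Ny}. \<forall>k\<in>{1..Nz}.
               (\<phi>p i j k - \<phi>n i j k) / \<Delta>t = - g i j k * \<mu> i j k"
    and eq2: "\<forall>i\<in>{1..Nx}. \<forall>j\<in>{1..Ny}. \<forall>k\<in>{1..Nz}.
               \<mu> i j k = Q * dF (3/2 * \<phi>n i j k - 1/2 * \<phi>m i j k) / \<epsilon>^2
                 - lap_d h (\<lambda>a b c. (\<phi>p a b c + \<phi>n a b c) / 2) i j k
                 + S * ((\<phi>p i j k + \<phi>n i j k) / 2 - (3/2 * \<phi>n i j k - 1/2 * \<phi>m i j k))"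
    and eq3: "inner_h Nx Ny Nz h (\<lambda>i j k. F (\<phi>p i j k) - F (\<phi>n i j k)) (\<lambda>_ _ _. 1)
              = Q * inner_h Nx Ny Nz h (\<lambda>i j k. dF (3/2 * \<phi>n i j k - 1/2 * \<phi>m i j k))
                                       (\<lambda>i j k. \<phi>p i j k - \<phi>n i j k)"
  shows "inner_h Nx Ny Nz h (\<lambda>i j k. F (\<phi>p i j k) - F (\<phi>n i j k)) (\<lambda>_ _ _. 1) / \<epsilon>^2
         + 1/2 * ((norm_e Nx Ny Nz h \<phi>p)^2 - (norm_e Nx Ny Nz h \<phi>n)^2)
         + S/4 * ((norm_h Nx Ny Nz h (\<lambda>i j k. \<phi>p i j k - \<phi>n i j k))^2
                  - (norm_h Nx Ny Nz h (\<lambda>i j k. \<phi>n i j k - \<phi>m i j k))^2)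
       = - \<Delta>t * (norm_h Nx Ny Nz h (\<lambda>i j k. sqrt (g i j k) * \<mu> i j k))^2
         - S/4 * (norm_h Nx Ny Nz h (\<lambda>i j k. \<phi>p i j k - 2 * \<phi>n i j k + \<phi>m i j k))^2
       \<and> - \<Delta>t * (norm_h Nx Ny Nz h (\<lambda>i j k. sqrt (g i j k) * \<mu> i j k))^2
         - S/4 * (norm_h Nx Ny Nz h (\<lambda>i j k. \<phi>p i j k - 2 * \<phi>n i j k + \<phi>m i j k))^2 \<le> 0
       \<and> Etilde Nx Ny Nz h \<epsilon> S \<phi>p \<phi>n \<le> Etilde Nx Ny Nz h \<epsilon> S \<phi>n \<phi>m"
proof -
  have "h > 0" using \<open>Nx \<ge> 1\<close> \<open>lx > 0\<close> \<open>h = lx / Nx\<close> by simp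
  let ?a = "\<lambda>i j k. \<phi>p i j k - \<phi>n i j k"
  let ?c = "\<lambda>i j k. \<phi>p i j k - 2 * \<phi>n i j k + \<phi>m i j k"
  let ?G = "\<lambda>i j k. sqrt (g i j k) * \<mu> i j k"
  let ?bulk_change = "inner_h Nx Ny Nz h (\<lambda>i j k. F (\<phi>p i j k) - F (\<phi>n i j k)) (\<lambda>_ _ _. 1)"
  let ?energy_change = "?bulk_change / \<epsilon>^2
         + 1/2 * ((norm_e Nx Ny Nz h \<phi>p)^2 - (norm_e Nx Ny Nz h \<phi>n)^2)
         + S/4 * ((norm_h Nx Ny Nz h ?a)^2 - (norm_h Nx Ny Nz h (\<lambda>i j k. \<phi>n i j k - \<phi>m i j k))^2)"
  let ?dissipation = "- \<Delta>t * (norm_h Nx Ny Nz h ?G)^2 - S/4 * (norm_h Nx Ny Nz h ?c)^2"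
  have nonlinear: "inner_h Nx Ny Nz h
        (\<lambda>i j k. Q * dF (3/2 * \<phi>n i j k - 1/2 * \<phi>m i j k) / \<epsilon>^2) ?a = ?bulk_change / \<epsilon>^2"
    using eq3 by (simp add: inner_h_def sum_distrib_left sum_divide_distrib algebra_simps)
  have "inner_h Nx Ny Nz h \<mu> ?a = - \<Delta>t * (norm_h Nx Ny Nz h ?G)^2"
    using \<open>\<Delta>t > 0\<close> \<open>h > 0\<close> g_nonneg eq1 by (intro inner_h_mobility_increment) auto
  moreover have "inner_h Nx Ny Nz h \<mu> ?a = ?energy_change + S/4 * (norm_h Nx Ny Nz h ?c)^2"
    using inner_h_chemical_potential_increment[OF \<open>neumann Nx Ny Nz \<phi>p\<close> \<open>neumann Nx Ny Nz \<phi>n\<close>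
        _ eq2] \<open>h > 0\<close>
    unfolding nonlinear by (simp add: algebra_simps)
  ultimately have identity: "?energy_change = ?dissipation" by linarith
  have "0 \<le> \<Delta>t * (norm_h Nx Ny Nz h ?G)^2" and "0 \<le> S/4 * (norm_h Nx Ny Nz h ?c)^2"
    using \<open>\<Delta>t > 0\<close> \<open>S > 0\<close> by simp_all
  then have "?dissipation \<le> 0" by linarith
  with identity Etilde_diff[of Nx Ny Nz h \<epsilon> S \<phi>p \<phi>n \<phi>m] show ?thesis by linarith
qed

end
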